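(* Let $R$ be a ring of finite characteristic and $J$ a nil ideal of $R$ of bounded index. Then the following are equivalent: (1) $R$ is an $n$-torsion clean ring for some $n\in\mathbb{N}$; (2) $R/J$ is a $t$-torsion clean ring for some $t\in\mathbb{N}$.
   Context: All rings are associative with identity. An ideal $I$ is nil of bounded index if there is $k$ with $r^k=0$ for all $r\in I$. A ring $R$ is $n$-torsion clean if every $r\in R$ can be written $r=e+u$ with $e^2=e$, $u$ a unit, $u^n=1$, and $n$ is the smallest natural number with this property. *)

theory Defs
  imports "HOL-Algebra.Algebra"
begin

definition finite_char :: "('a, 'b) ring_scheme \<Rightarrow> bool" where
  "finite_char R \<longleftrightarrow> (\<exists>m::nat. m > 0 \<and> [m] \<cdot>\<^bsub>R\<^esub> \<one>\<^bsub>R\<^esub> = \<zero>\<^bsub>R\<^esub>)"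

definition nil_bounded_index :: "'a set \<Rightarrow> ('a, 'b) ring_scheme \<Rightarrow> bool" where
  "nil_bounded_index J R \<longleftrightarrow> (\<exists>k::nat. \<forall>r\<in>J. r [^]\<^bsub>R\<^esub> k = \<zero>\<^bsub>R\<^esub>)"

definition torsion_clean_with :: "('a, 'b) ring_scheme \<Rightarrow> nat \<Rightarrow> bool" where
  "torsion_clean_with R n \<longleftrightarrow> n > 0 \<and>
     (\<forall>r\<in>carrier R. \<exists>e u. e \<in> carrier R \<and> e \<otimes>\<^bsub>R\<^esub> e = e \<and> u \<in> Units R \<and>
        u [^]\<^bsub>R\<^esub> n = \<one>\<^bsub>R\<^esub> \<and> r = e \<oplus>\<^bsub>R\<^esub> u)"

definition n_torsion_clean :: "('a, 'b) ring_scheme \<Rightarrow> nat \<Rightarrow> bool" where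
  "n_torsion_clean R n \<longleftrightarrow> torsion_clean_with R n \<and>
     (\<forall>m. 0 < m \<and> m < n \<longrightarrow> \<not> torsion_clean_with R m)"

end

theory Submission
  imports Defs "HOL-Computational_Algebra.Polynomial"
begin

text \<open>
  Going down is clear, since a surjective ring homomorphism maps idempotents to idempotents and
  units of order dividing \<open>n\<close> to such units. Going up, write a preimage of \<open>r + J\<close> as
  \<open>e + u\<close> where \<open>e\<close> is an idempotent lifting the idempotent part (idempotents lift modulo a
  nil ideal) and \<open>u\<close> then lifts the unit part. Then \<open>u\<close> is a unit, being invertible modulo a nil
  ideal, and \<open>u\<^sup>t = 1 + j\<close> with \<open>j \<in> J\<close>. If \<open>m\<close> is the characteristic and \<open>j\<^sup>k = 0\<close>, all binomial
  coefficients \<open>C(m k!, i)\<close> with \<open>0 < i < k\<close> are divisible by \<open>m\<close>, so \<open>(1 + j)\<^bsup>m k!\<^esup> = 1\<close>. Hence \<open>R\<close>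
  is torsion clean with exponent \<open>t m k!\<close>, and a least such exponent exists.

  All the needed identities involve a single element, so they are proved for integer polynomials
  and transported into the (not necessarily commutative) ring by evaluation.
\<close>

lemma dvd_binomial_mult_fact:
  fixes m K i :: nat
  assumes "1 \<le> i" "i \<le> K"
  shows "m dvd ((m * fact K) choose i)"
proof -
  obtain q where q: "fact K = i * q" using dvd_fact[OF assms] by (auto elim: dvdE)
  have "i * ((m * fact K) choose i) = (m * fact K) * ((m * fact K - 1) choose (i - 1))"
    using assms by (intro times_binomial_minus1_eq) auto
  also have "\<dots> = i * (m * q * ((m * fact K - 1) choose (i - 1)))" by (simp add: q)
  finally have "(m * fact K) choose i = m * q * ((m * fact K - 1) choose (i - 1))"
    using assms by simp
  then show ?thesis by simp
qed

lemma one_plus_power_mult_fact: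
  fixes x :: "'a::comm_ring_1" and m K :: nat
  assumes K: "K \<ge> 1"
  shows "\<exists>A B. (1 + x) ^ (m * fact K) = 1 + of_nat m * A + x ^ K * B"
proof (cases "m = 0")
  case True
  then show ?thesis by (intro exI[of _ 0]) simp
next
  case False
  define N where "N = m * fact K"
  have "K \<le> fact K" by (rule fact_ge_self)
  moreover have "(fact K :: nat) \<le> m * fact K" using False by simp
  ultimately have KN: "K \<le> N" unfolding N_def by linarith
  define f where "f k = of_nat (N choose k) * x ^ k" for k
  have "(1 + x) ^ N = (\<Sum>k\<le>N. f k)"
    using binomial_ring[of x 1 N] by (simp add: f_def add.commute)
  also have "\<dots> = (\<Sum>k\<in>{0..<K}. f k) + (\<Sum>k\<in>{K..<Suc N}. f k)"
    using KN by (simp add: sum.atLeastLessThan_concat atLeast0AtMost[symmetric]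
        atLeastLessThanSuc_atLeastAtMost[symmetric])
  also have "(\<Sum>k\<in>{0..<K}. f k) = f 0 + (\<Sum>k\<in>{1..<K}. f k)"
    using K by (simp add: sum.atLeast_Suc_lessThan)
  also have "f 0 = 1" by (simp add: f_def)
  also have "(\<Sum>k\<in>{1..<K}. f k) = of_nat m * (\<Sum>k\<in>{1..<K}. of_nat ((N choose k) div m) * x ^ k)"
    unfolding sum_distrib_left
  proof (rule sum.cong)
    fix k assume "k \<in> {1..<K}"
    then have "m dvd N choose k" unfolding N_def by (intro dvd_binomial_mult_fact) auto
    then have "of_nat (N choose k) = (of_nat m * of_nat ((N choose k) div m) :: 'a)"
      by (metis dvd_mult_div_cancel of_nat_mult)
    then show "f k = of_nat m * (of_nat ((N choose k) div m) * x ^ k)"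
      by (simp add: f_def mult.assoc)
  qed simp
  also have "(\<Sum>k\<in>{K..<Suc N}. f k) = x ^ K * (\<Sum>k\<in>{K..<Suc N}. of_nat (N choose k) * x ^ (k - K))"
    unfolding sum_distrib_left
  proof (rule sum.cong)
    fix k assume "k \<in> {K..<Suc N}"
    then have "x ^ k = x ^ K * x ^ (k - K)" by (simp flip: power_add)
    then show "f k = x ^ K * (of_nat (N choose k) * x ^ (k - K))" by (simp add: f_def algebra_simps)
  qed simp
  finally show ?thesis unfolding N_def by blast
qed

text \<open>Iterating \<open>f \<mapsto> 3f\<^sup>2 - 2f\<^sup>3\<close> squares the defect \<open>f\<^sup>2 - f\<close> up to a factor: with
  \<open>y = f\<^sup>2 - f\<close>, the new defect is \<open>y\<^sup>2 (4y - 3)\<close>.\<close>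
lemma idempotent_approximation:
  fixes x :: "'a::comm_ring_1"
  shows "\<exists>f g h. f = x + (x*x - x) * g \<and> f*f - f = (x*x - x) ^ (2^s) * h"
proof (induction s)
  case 0
  show ?case by (rule exI[of _ x], rule exI[of _ 0], rule exI[of _ 1]) simp
next
  case (Suc s)
  define d where "d = x*x - x"
  from Suc obtain f g h where fg: "f = x + d * g" and fh: "f*f - f = d ^ (2^s) * h"
    unfolding d_def by blast
  define y where "y = f*f - f"
  define D where "D = d ^ (2^s - 1)"
  have "d ^ (2^s) = d * D" unfolding D_def by (metis Suc_pred' pos2 power_Suc zero_less_power)
  define f' where "f' = 3*f*f - 2*f*f*f"
  have f'_eq: "f' = f - (2*f - 1) * y" unfolding f'_def y_def by (simp add: algebra_simps)
  have "x = f - d * g" using fg by simp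
  then have "f' = x + d * (g - (2*f - 1) * D * h)"
    unfolding f'_eq using fh \<open>d ^ (2^s) = d * D\<close> by (simp add: y_def algebra_simps)
  moreover
  have sq: "(2*f - 1)*(2*f - 1) = 4*y + 1" unfolding y_def by (simp add: algebra_simps)
  have "f'*f' - f' = y - (2*f-1)*(2*f-1)*y + (2*f-1)*(2*f-1)*y*y"
    unfolding f'_eq y_def by (simp add: algebra_simps)
  then have "f'*f' - f' = y * y * (4*y - 3)"
    unfolding sq by (simp add: algebra_simps)
  then have "f'*f' - f' = d ^ (2 ^ Suc s) * (h * h * (4*y - 3))"
    using fh by (simp add: y_def power_mult power2_eq_square algebra_simps)
  ultimately show ?case unfolding d_def by blast
qed

context ring begin

definition int_embed :: "int \<Rightarrow> 'a" where
  "int_embed c = [c] \<cdot> \<one>"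

lemma int_embed_closed [simp]: "int_embed c \<in> carrier R"
  unfolding int_embed_def by simp

lemma int_embed_0 [simp]: "int_embed 0 = \<zero>"
  unfolding int_embed_def by (simp add: add_pow_int_ge)

lemma int_embed_1 [simp]: "int_embed 1 = \<one>"
  unfolding int_embed_def by simp

lemma int_embed_add: "int_embed (c + d) = int_embed c \<oplus> int_embed d"
  unfolding int_embed_def by (simp add: add.int_pow_mult)

lemma int_embed_mult_left: "x \<in> carrier R \<Longrightarrow> int_embed c \<otimes> x = [c] \<cdot> x"
  unfolding int_embed_def using add_pow_ldistr_int[of \<one> x c] by simp

lemma int_embed_mult_right: "x \<in> carrier R \<Longrightarrow> x \<otimes> int_embed c = [c] \<cdot> x"
  unfolding int_embed_def using add_pow_rdistr_int[of x \<one> c] by simp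

lemma int_embed_commute: "x \<in> carrier R \<Longrightarrow> int_embed c \<otimes> x = x \<otimes> int_embed c"
  by (simp add: int_embed_mult_left int_embed_mult_right)

lemma int_embed_mult: "int_embed (c * d) = int_embed c \<otimes> int_embed d"
  by (simp add: int_embed_mult_left) (simp add: int_embed_def add.int_pow_pow mult.commute)

text \<open>As integers are central, evaluation at a single element is a ring homomorphism
  \<open>\<int>[X] \<rightarrow> R\<close> even when \<open>R\<close> is not commutative.\<close>
definition eval_int_poly :: "'a \<Rightarrow> int poly \<Rightarrow> 'a" where
  "eval_int_poly x p = fold_coeffs (\<lambda>c acc. int_embed c \<oplus> x \<otimes> acc) p \<zero>"

lemma eval_int_poly_0 [simp]: "eval_int_poly x 0 = \<zero>"
  unfolding eval_int_poly_def by simp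

lemma eval_int_poly_closed [simp]: "x \<in> carrier R \<Longrightarrow> eval_int_poly x p \<in> carrier R"
  by (induction p) (auto simp: eval_int_poly_def split: if_splits)

lemma eval_int_poly_pCons:
  assumes x: "x \<in> carrier R"
  shows "eval_int_poly x (pCons c p) = int_embed c \<oplus> x \<otimes> eval_int_poly x p"
proof (cases "p = 0")
  case True
  then show ?thesis using x by (cases "c = 0") (auto simp: eval_int_poly_def)
next
  case False
  then show ?thesis by (simp add: eval_int_poly_def)
qed

lemma eval_int_poly_add:
  "x \<in> carrier R \<Longrightarrow> eval_int_poly x (p + q) = eval_int_poly x p \<oplus> eval_int_poly x q"
proof (induction p arbitrary: q)
  case 0
  then show ?case by simp
next
  case (pCons a p)
  obtain b q' where q: "q = pCons b q'" by (cases q) auto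
  have "eval_int_poly x (pCons a p + q)
      = int_embed (a + b) \<oplus> x \<otimes> (eval_int_poly x p \<oplus> eval_int_poly x q')"
    using pCons by (simp add: q eval_int_poly_pCons)
  also have "\<dots> = (int_embed a \<oplus> x \<otimes> eval_int_poly x p) \<oplus> (int_embed b \<oplus> x \<otimes> eval_int_poly x q')"
    using pCons by (simp add: int_embed_add r_distr a_ac)
  finally show ?case using pCons by (simp add: q eval_int_poly_pCons)
qed

lemma eval_int_poly_smult:
  "x \<in> carrier R \<Longrightarrow> eval_int_poly x (smult c q) = int_embed c \<otimes> eval_int_poly x q"
proof (induction q)
  case 0
  then show ?case by simp
next
  case (pCons a p)
  have "x \<otimes> (int_embed c \<otimes> eval_int_poly x p) = int_embed c \<otimes> (x \<otimes> eval_int_poly x p)"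
    using pCons by (simp add: m_assoc[symmetric] int_embed_commute[of x c])
  then show ?case
    using pCons by (simp add: eval_int_poly_pCons int_embed_mult r_distr m_assoc)
qed

lemma eval_int_poly_mult:
  "x \<in> carrier R \<Longrightarrow> eval_int_poly x (p * q) = eval_int_poly x p \<otimes> eval_int_poly x q"
proof (induction p)
  case 0
  then show ?case by simp
next
  case (pCons a p)
  have "eval_int_poly x (pCons a p * q) = eval_int_poly x (smult a q + pCons 0 (p * q))" by simp
  also have "\<dots> = int_embed a \<otimes> eval_int_poly x q \<oplus> x \<otimes> (eval_int_poly x p \<otimes> eval_int_poly x q)"
    using pCons by (simp add: eval_int_poly_add eval_int_poly_smult eval_int_poly_pCons)
  also have "\<dots> = (int_embed a \<oplus> x \<otimes> eval_int_poly x p) \<otimes> eval_int_poly x q"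
    using pCons by (simp add: l_distr m_assoc)
  finally show ?case using pCons by (simp add: eval_int_poly_pCons)
qed

lemma eval_int_poly_one [simp]: "x \<in> carrier R \<Longrightarrow> eval_int_poly x 1 = \<one>"
  by (simp add: one_pCons eval_int_poly_pCons)

lemma eval_int_poly_X [simp]: "x \<in> carrier R \<Longrightarrow> eval_int_poly x [:0, 1:] = x"
  by (simp add: eval_int_poly_pCons)

lemma eval_int_poly_of_int: "x \<in> carrier R \<Longrightarrow> eval_int_poly x (of_int c) = int_embed c"
  by (simp add: of_int_poly eval_int_poly_pCons)

lemma eval_int_poly_uminus:
  assumes x: "x \<in> carrier R"
  shows "eval_int_poly x (- p) = \<ominus> eval_int_poly x p"
proof -
  have "eval_int_poly x (- p) \<oplus> eval_int_poly x p = \<zero>"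
    using x by (simp add: eval_int_poly_add[symmetric])
  from minus_equality[OF this] x show ?thesis by simp
qed

lemma eval_int_poly_diff:
  "x \<in> carrier R \<Longrightarrow> eval_int_poly x (p - q) = eval_int_poly x p \<ominus> eval_int_poly x q"
  by (simp only: diff_conv_add_uminus eval_int_poly_add eval_int_poly_uminus minus_eq)

lemma eval_int_poly_power:
  "x \<in> carrier R \<Longrightarrow> eval_int_poly x (p ^ n) = eval_int_poly x p [^] n"
  by (induction n) (simp_all only: power_0 power_Suc2 eval_int_poly_mult nat_pow_0 nat_pow_Suc
      eval_int_poly_one)

lemmas eval_int_poly_simps = eval_int_poly_add eval_int_poly_diff eval_int_poly_mult
  eval_int_poly_power

lemma add_minus_cancel_left: "x \<in> carrier R \<Longrightarrow> y \<in> carrier R \<Longrightarrow> y \<oplus> (x \<ominus> y) = x"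
  by (simp add: minus_eq a_lcomm r_neg)

lemma nat_pow_eq_zero_mono:
  fixes k n :: nat
  assumes "x \<in> carrier R" "x [^] k = \<zero>" "k \<le> n"
  shows "x [^] n = \<zero>"
proof -
  obtain d where "n = k + d" using \<open>k \<le> n\<close> le_Suc_ex by blast
  then have "x [^] n = x [^] k \<otimes> x [^] d" using assms(1) by (simp add: nat_pow_mult)
  also have "\<dots> = \<zero>" using assms by simp
  finally show ?thesis .
qed

lemma Units_one_plus_nilpotent:
  fixes k :: nat
  assumes j: "j \<in> carrier R" and nil: "j [^] k = \<zero>"
  shows "\<one> \<oplus> j \<in> Units R"
proof -
  define Xp :: "int poly" where "Xp = [:0, 1:]"
  define P where "P = (\<Sum>i<k. (- Xp) ^ i)"
  have "(1 + Xp) * P = 1 - (- Xp) ^ k"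
    unfolding P_def using one_diff_power_eq[of "- Xp" k] by simp
  also have "\<dots> = 1 - of_int ((- 1) ^ k) * Xp ^ k"
    by (simp add: power_minus[of Xp])
  finally have geom: "(1 + Xp) * P = 1 - of_int ((- 1) ^ k) * Xp ^ k" .
  have eval_Xp: "eval_int_poly j Xp = j" using j by (simp add: Xp_def)
  have inverse: "eval_int_poly j ((1 + Xp) * P) = \<one>"
    unfolding geom using j nil by (simp add: eval_int_poly_simps eval_int_poly_of_int eval_Xp minus_eq)
  then have "eval_int_poly j (P * (1 + Xp)) = \<one>" by (simp only: mult.commute)
  with inverse have "(\<one> \<oplus> j) \<otimes> eval_int_poly j P = \<one>" "eval_int_poly j P \<otimes> (\<one> \<oplus> j) = \<one>"
    using j by (simp_all add: eval_int_poly_simps eval_Xp)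
  then show ?thesis using j unfolding Units_def by auto
qed

lemma Units_of_inverse_mod_nilpotent:
  fixes k :: nat
  assumes u: "u \<in> carrier R" and v: "v \<in> carrier R"
    and nil_vu: "(v \<otimes> u \<ominus> \<one>) [^] k = \<zero>" and nil_uv: "(u \<otimes> v \<ominus> \<one>) [^] k = \<zero>"
  shows "u \<in> Units R"
proof -
  have vu: "v \<otimes> u \<in> Units R" and uv: "u \<otimes> v \<in> Units R"
    using Units_one_plus_nilpotent[OF _ nil_vu] Units_one_plus_nilpotent[OF _ nil_uv] u v
    by (simp_all add: add_minus_cancel_left)
  have left: "(inv (v \<otimes> u) \<otimes> v) \<otimes> u = \<one>"
    using u v vu by (simp add: m_assoc)
  have right: "u \<otimes> (v \<otimes> inv (u \<otimes> v)) = \<one>"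
    using u v uv by (simp add: m_assoc[symmetric])
  have "inv (v \<otimes> u) \<otimes> v = v \<otimes> inv (u \<otimes> v)"
    using inv_unique[OF left right] u v vu uv by auto
  then have "(v \<otimes> inv (u \<otimes> v)) \<otimes> u = \<one>" using left by simp
  moreover have "v \<otimes> inv (u \<otimes> v) \<in> carrier R" using v uv by simp
  ultimately show ?thesis using right u unfolding Units_def by blast
qed

lemma nat_pow_mult_fact_one_plus_nilpotent:
  fixes m K :: nat
  assumes j: "j \<in> carrier R" and nil: "j [^] K = \<zero>" and "K \<ge> 1" and char: "[m] \<cdot> \<one> = \<zero>"
  shows "(\<one> \<oplus> j) [^] (m * fact K) = \<one>"
proof -
  define Xp :: "int poly" where "Xp = [:0, 1:]"
  obtain A B where AB: "(1 + Xp) ^ (m * fact K) = 1 + of_nat m * A + Xp ^ K * B"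
    using one_plus_power_mult_fact[OF \<open>K \<ge> 1\<close>] by blast
  have "eval_int_poly j (of_nat m) = \<zero>"
    using eval_int_poly_of_int[OF j, of "int m"] char by (simp add: int_embed_def add_pow_int_ge)
  then have "eval_int_poly j ((1 + Xp) ^ (m * fact K)) = \<one>"
    unfolding AB using j nil by (simp add: eval_int_poly_simps Xp_def)
  then show ?thesis using j by (simp add: eval_int_poly_simps Xp_def)
qed

lemma idempotent_lift_nilpotent:
  fixes k :: nat
  assumes J: "ideal J R" and a: "a \<in> carrier R"
    and aJ: "a \<otimes> a \<ominus> a \<in> J" and nil: "(a \<otimes> a \<ominus> a) [^] k = \<zero>"
  shows "\<exists>e\<in>carrier R. e \<otimes> e = e \<and> e \<ominus> a \<in> J"
proof -
  define Xp :: "int poly" where "Xp = [:0, 1:]"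
  obtain f g h where fg: "f = Xp + (Xp*Xp - Xp) * g" and fh: "f*f - f = (Xp*Xp - Xp) ^ (2^k) * h"
    using idempotent_approximation[of Xp k] by blast
  define e where "e = eval_int_poly a f"
  have e: "e \<in> carrier R" unfolding e_def using a by simp
  have eval_Xp: "eval_int_poly a Xp = a" using a by (simp add: Xp_def)
  have defect: "eval_int_poly a (Xp*Xp - Xp) = a \<otimes> a \<ominus> a"
    using a by (simp add: eval_int_poly_simps eval_Xp)
  have "(a \<otimes> a \<ominus> a) [^] ((2::nat) ^ k) = \<zero>"
    using nat_pow_eq_zero_mono[OF _ nil] a by (simp add: less_exp less_imp_le)
  then have "eval_int_poly a (f*f - f) = \<zero>"
    unfolding fh using a by (simp add: eval_int_poly_simps defect)
  then have "e \<otimes> e \<ominus> e = \<zero>"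
    using a by (simp add: eval_int_poly_simps e_def)
  then have "e \<otimes> e = e"
    using e by (metis add.inv_solve_right l_zero m_closed minus_eq zero_closed a_inv_def
        add.inv_closed)
  moreover have "e \<ominus> a = (a \<otimes> a \<ominus> a) \<otimes> eval_int_poly a g"
    using arg_cong[OF fg, of "\<lambda>p. eval_int_poly a (p - Xp)"] a
    by (simp add: eval_int_poly_simps defect e_def eval_Xp)
  then have "e \<ominus> a \<in> J" using a aJ J by (simp add: ideal.I_r_closed)
  ultimately show ?thesis using e by blast
qed

lemma FactRing_carrier_eq_image:
  "carrier (R Quot J) = (+>) J ` carrier R"
  by (auto simp: FactRing_def A_RCOSETS_def')

lemma Units_lift_nil_ideal:
  fixes k :: nat
  assumes J: "ideal J R" and nil: "\<forall>r\<in>J. r [^] k = \<zero>"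
    and u: "u \<in> carrier R" and U: "J +> u \<in> Units (R Quot J)"
  shows "u \<in> Units R"
proof -
  interpret H: ring_hom_ring R "R Quot J" "(+>) J"
    using J by (rule ideal.rcos_ring_hom_ring)
  obtain V where V: "V \<in> carrier (R Quot J)"
      "V \<otimes>\<^bsub>R Quot J\<^esub> (J +> u) = \<one>\<^bsub>R Quot J\<^esub>" "(J +> u) \<otimes>\<^bsub>R Quot J\<^esub> V = \<one>\<^bsub>R Quot J\<^esub>"
    using U unfolding Units_def by blast
  obtain v where v: "v \<in> carrier R" "V = J +> v"
    using V(1) FactRing_carrier_eq_image by auto
  have "J +> (v \<otimes> u) = J +> \<one>" "J +> (u \<otimes> v) = J +> \<one>"
    using V v u by simp_all
  then have "v \<otimes> u \<ominus> \<one> \<in> J" "u \<otimes> v \<ominus> \<one> \<in> J"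
    using u v J by (simp_all add: quotient_eq_iff_same_a_r_cos)
  then show ?thesis
    using Units_of_inverse_mod_nilpotent[OF u v(1)] nil by blast
qed

lemma torsion_clean_with_lift_nil_ideal:
  fixes k m :: nat
  assumes J: "ideal J R" and nil: "\<forall>r\<in>J. r [^] k = \<zero>" and char: "m > 0" "[m] \<cdot> \<one> = \<zero>"
    and T: "torsion_clean_with (R Quot J) t"
  shows "torsion_clean_with R (t * (m * fact (Suc k)))"
  unfolding torsion_clean_with_def
proof (intro conjI ballI)
  interpret Q: ring "R Quot J"
    using J by (rule ideal.quotient_is_ring)
  interpret H: ring_hom_ring R "R Quot J" "(+>) J"
    using J by (rule ideal.rcos_ring_hom_ring)
  have Jcarr: "x \<in> carrier R" if "x \<in> J" for x
    using J that by (rule ideal.Icarr)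
  have coset_eq: "J +> x = J +> y \<longleftrightarrow> x \<ominus> y \<in> J" if "x \<in> carrier R" "y \<in> carrier R" for x y
    using J that by (simp add: quotient_eq_iff_same_a_r_cos)
  show "t * (m * fact (Suc k)) > 0" using T char by (simp add: torsion_clean_with_def)
  fix r assume r: "r \<in> carrier R"
  obtain E U where E: "E \<in> carrier (R Quot J)" "E \<otimes>\<^bsub>R Quot J\<^esub> E = E"
    and U: "U \<in> Units (R Quot J)" "U [^]\<^bsub>R Quot J\<^esub> t = \<one>\<^bsub>R Quot J\<^esub>"
    and rEU: "J +> r = E \<oplus>\<^bsub>R Quot J\<^esub> U"
    using T[unfolded torsion_clean_with_def, THEN conjunct2, rule_format, OF H.hom_closed[OF r]]
    by blast
  obtain a where a: "a \<in> carrier R" "E = J +> a"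
    using E(1) FactRing_carrier_eq_image by auto
  have "J +> (a \<otimes> a) = J +> a" using E(2) a H.hom_mult[OF a(1) a(1)] by simp
  then have "a \<otimes> a \<ominus> a \<in> J" using coset_eq[OF m_closed[OF a(1) a(1)] a(1)] by blast
  then obtain e where e: "e \<in> carrier R" "e \<otimes> e = e" "e \<ominus> a \<in> J"
    using idempotent_lift_nilpotent[OF J a(1)] nil by blast
  define u where "u = r \<ominus> e"
  have u: "u \<in> carrier R" unfolding u_def using r e by simp
  have r_eq: "r = e \<oplus> u" unfolding u_def using r e by (simp add: add_minus_cancel_left)
  have "J +> e = E" using coset_eq[OF e(1) a(1)] e(3) a(2) by simp
  then have "E \<oplus>\<^bsub>R Quot J\<^esub> (J +> u) = E \<oplus>\<^bsub>R Quot J\<^esub> U"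
    using rEU r_eq H.hom_add[OF e(1) u] by simp
  then have Uu: "J +> u = U"
    by (rule Q.add.l_cancel[OF _ H.hom_closed[OF u] Q.Units_closed[OF U(1)] E(1)])
  have "u \<in> Units R" using Units_lift_nil_ideal[OF J nil u] U(1) Uu by simp
  moreover have "u [^] (t * (m * fact (Suc k))) = \<one>"
  proof -
    have "J +> (u [^] t) = J +> \<one>" using Uu U(2) H.hom_nat_pow[OF u] H.hom_one by simp
    then have j: "u [^] t \<ominus> \<one> \<in> J" using coset_eq[OF nat_pow_closed[OF u] one_closed] by blast
    have nilpotent: "(u [^] t \<ominus> \<one>) [^] Suc k = \<zero>"
      by (rule nat_pow_eq_zero_mono[OF Jcarr[OF j] nil[rule_format, OF j]]) simp
    have "(\<one> \<oplus> (u [^] t \<ominus> \<one>)) [^] (m * fact (Suc k)) = \<one>"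
      by (rule nat_pow_mult_fact_one_plus_nilpotent[OF Jcarr[OF j] nilpotent _ char(2)]) simp
    then show ?thesis using u by (simp add: add_minus_cancel_left nat_pow_pow)
  qed
  ultimately show "\<exists>e u. e \<in> carrier R \<and> e \<otimes> e = e \<and> u \<in> Units R \<and>
      u [^] (t * (m * fact (Suc k))) = \<one> \<and> r = e \<oplus> u"
    using e r_eq by blast
qed

end

lemma (in ring_hom_ring) torsion_clean_with_image:
  assumes surj: "h ` carrier R = carrier S" and T: "torsion_clean_with R n"
  shows "torsion_clean_with S n"
  unfolding torsion_clean_with_def
proof (intro conjI ballI)
  show "n > 0" using T by (simp add: torsion_clean_with_def)
  fix y assume "y \<in> carrier S"
  then obtain r where r: "r \<in> carrier R" "y = h r" using surj by auto
  obtain e u where e: "e \<in> carrier R" "e \<otimes> e = e" and u: "u \<in> Units R" "u [^] n = \<one>"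
    and r_eq: "r = e \<oplus> u"
    using T[unfolded torsion_clean_with_def, THEN conjunct2, rule_format, OF r(1)] by blast
  obtain v where v: "v \<in> carrier R" "v \<otimes> u = \<one>" "u \<otimes> v = \<one>"
    using u(1) unfolding Units_def by blast
  have uc: "u \<in> carrier R" using u(1) by blast
  have "h v \<otimes>\<^bsub>S\<^esub> h u = \<one>\<^bsub>S\<^esub>" "h u \<otimes>\<^bsub>S\<^esub> h v = \<one>\<^bsub>S\<^esub>"
    using hom_mult[OF v(1) uc] hom_mult[OF uc v(1)] v by simp_all
  then have "h u \<in> Units S"
    using uc v(1) unfolding Units_def by auto
  moreover have "h e \<otimes>\<^bsub>S\<^esub> h e = h e" using hom_mult[OF e(1) e(1)] e(2) by simp
  moreover have "h u [^]\<^bsub>S\<^esub> n = \<one>\<^bsub>S\<^esub>" using hom_nat_pow[OF uc, of n] u(2) hom_one by simp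
  moreover have "y = h e \<oplus>\<^bsub>S\<^esub> h u" using hom_add[OF e(1) uc] r r_eq by simp
  ultimately show "\<exists>e u. e \<in> carrier S \<and> e \<otimes>\<^bsub>S\<^esub> e = e \<and> u \<in> Units S \<and>
      u [^]\<^bsub>S\<^esub> n = \<one>\<^bsub>S\<^esub> \<and> y = e \<oplus>\<^bsub>S\<^esub> u"
    using hom_closed[OF e(1)] by (intro exI[of _ "h e"] exI[of _ "h u"] conjI) auto
qed

lemma ex_n_torsion_clean_iff: "(\<exists>n. n_torsion_clean R n) \<longleftrightarrow> (\<exists>n. torsion_clean_with R n)"
proof
  assume "\<exists>n. torsion_clean_with R n"
  then have "torsion_clean_with R (LEAST n. torsion_clean_with R n)"
    and "\<forall>m < (LEAST n. torsion_clean_with R n). \<not> torsion_clean_with R m"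
    using LeastI_ex not_less_Least by blast+
  then show "\<exists>n. n_torsion_clean R n" unfolding n_torsion_clean_def by blast
qed (auto simp: n_torsion_clean_def)

theorem corollary2p12:
  fixes R :: "('a, 'b) ring_scheme" and J :: "'a set"
  assumes "ring R" and "ideal J R" and "finite_char R" and "nil_bounded_index J R"
  shows "(\<exists>n. n_torsion_clean R n) \<longleftrightarrow> (\<exists>t. n_torsion_clean (R Quot J) t)"
proof -
  interpret ring R by fact
  obtain k :: nat where nil: "\<forall>r\<in>J. r [^]\<^bsub>R\<^esub> k = \<zero>\<^bsub>R\<^esub>"
    using assms(4) unfolding nil_bounded_index_def by blast
  obtain m :: nat where char: "m > 0" "[m] \<cdot>\<^bsub>R\<^esub> \<one>\<^bsub>R\<^esub> = \<zero>\<^bsub>R\<^esub>"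
    using assms(3) unfolding finite_char_def by blast
  have "torsion_clean_with R n \<Longrightarrow> torsion_clean_with (R Quot J) n" for n
    using ring_hom_ring.torsion_clean_with_image[OF ideal.rcos_ring_hom_ring[OF assms(2)]]
      FactRing_carrier_eq_image by blast
  moreover have "torsion_clean_with (R Quot J) t \<Longrightarrow>
      torsion_clean_with R (t * (m * fact (Suc k)))" for t
    using torsion_clean_with_lift_nil_ideal[OF assms(2) nil char] .
  ultimately show ?thesis unfolding ex_n_torsion_clean_iff by blast
qed

end
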